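(* Let $j_1\ge0$ and let $J\ge j_1$ be an integer with $J\equiv j_1\pmod 2$. Then $$\sum_{\substack{j_2,j_3\ge0,\ j_2+j_3=J\\ (j_1,j_2,j_3)\in\mathbf J}}\phi_{j_1,j_2,j_3}(x_{12},x_{13},1)=\frac{\left(1-x_{13}^{j_1+1}x_{12}^{-j_1-1}\right)\left(1-x_{13}^{j_1+1}x_{12}^{j_1+1}\right)}{(j_1+1)\,x_{13}^{j_1}\,(1-x_{13}/x_{12})(1-x_{13}x_{12})}.$$
   Context: A triple $(j_1,j_2,j_3)$ of nonnegative integers is admissible if $|j_1-j_2|\le j_3\le j_1+j_2$ and $j_1+j_2+j_3$ is even; $\mathbf J$ denotes the set of admissible triples. Let $\mathcal H=\mathbb C[x_{12}+x_{12}^{-1},x_{13}+x_{13}^{-1},x_{23}+x_{23}^{-1}]\subset\mathbb C[x_{12}^{\pm1},x_{13}^{\pm1},x_{23}^{\pm1}]$. For $a,b\in\{\pm1\}$ set $K_{a,b}(j_1,j_2,j_3)=ab\,\frac{(aj_1+bj_2+j_3+a+b+2)(aj_1+bj_2-j_3+a+b)}{4(j_1+1)(j_2+1)}$. The genus two Schur polynomials $(\phi_{j_1,j_2,j_3})_{(j_1,j_2,j_3)\in\mathbf J}$ are the unique family in $\mathcal H$ with $\phi_{0,0,0}=1$ such that for all admissible $(j_1,j_2,j_3)$: $(x_{12}+x_{12}^{-1})\phi_{j_1,j_2,j_3}=\sum_{a,b\in\{\pm1\}}K_{a,b}(j_1,j_2,j_3)\phi_{j_1+a,j_2+b,j_3}$,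 $(x_{13}+x_{13}^{-1})\phi_{j_1,j_2,j_3}=\sum_{a,b\in\{\pm1\}}K_{a,b}(j_1,j_3,j_2)\phi_{j_1+a,j_2,j_3+b}$, $(x_{23}+x_{23}^{-1})\phi_{j_1,j_2,j_3}=\sum_{a,b\in\{\pm1\}}K_{a,b}(j_2,j_3,j_1)\phi_{j_1,j_2+a,j_3+b}$, where $\phi$ of a non-admissible triple is interpreted as $0$. *)

theory Defs
  imports Complex_Main
begin

definition admissible :: "nat \<Rightarrow> nat \<Rightarrow> nat \<Rightarrow> bool" where
  "admissible j1 j2 j3 \<longleftrightarrow>
     int j3 \<ge> \<bar>int j1 - int j2\<bar> \<and> j3 \<le> j1 + j2 \<and> even (j1 + j2 + j3)"

definition Kc :: "int \<Rightarrow> int \<Rightarrow> nat \<Rightarrow> nat \<Rightarrow> nat \<Rightarrow> complex" where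
  "Kc a b j1 j2 j3 =
     of_int (a * b * (a * int j1 + b * int j2 + int j3 + a + b + 2)
                   * (a * int j1 + b * int j2 - int j3 + a + b))
     / (4 * (of_nat j1 + 1) * (of_nat j2 + 1))"

definition ext ::
  "(nat \<Rightarrow> nat \<Rightarrow> nat \<Rightarrow> complex \<Rightarrow> complex \<Rightarrow> complex \<Rightarrow> complex)
   \<Rightarrow> int \<Rightarrow> int \<Rightarrow> int \<Rightarrow> complex \<Rightarrow> complex \<Rightarrow> complex \<Rightarrow> complex" where
  "ext phi i1 i2 i3 x y z =
     (if i1 \<ge> 0 \<and> i2 \<ge> 0 \<and> i3 \<ge> 0 \<and> admissible (nat i1) (nat i2) (nat i3)
      then phi (nat i1) (nat i2) (nat i3) x y z else 0)"

definition in_H :: "(complex \<Rightarrow> complex \<Rightarrow> complex \<Rightarrow> complex) \<Rightarrow> bool" where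
  "in_H f \<longleftrightarrow> (\<exists>N (c :: nat \<Rightarrow> nat \<Rightarrow> nat \<Rightarrow> complex).
     \<forall>x12 x13 x23. x12 \<noteq> 0 \<longrightarrow> x13 \<noteq> 0 \<longrightarrow> x23 \<noteq> 0 \<longrightarrow>
       f x12 x13 x23 = (\<Sum>a\<le>N. \<Sum>b\<le>N. \<Sum>d\<le>N. c a b d
          * (x12 + inverse x12) ^ a * (x13 + inverse x13) ^ b * (x23 + inverse x23) ^ d))"

definition genus2_schur ::
  "(nat \<Rightarrow> nat \<Rightarrow> nat \<Rightarrow> complex \<Rightarrow> complex \<Rightarrow> complex \<Rightarrow> complex) \<Rightarrow> bool" where
  "genus2_schur phi \<longleftrightarrow>
     (\<forall>j1 j2 j3. admissible j1 j2 j3 \<longrightarrow> in_H (phi j1 j2 j3)) \<and>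
     (\<forall>x y z. x \<noteq> 0 \<longrightarrow> y \<noteq> 0 \<longrightarrow> z \<noteq> 0 \<longrightarrow> phi 0 0 0 x y z = 1) \<and>
     (\<forall>j1 j2 j3 x y z. admissible j1 j2 j3 \<longrightarrow> x \<noteq> 0 \<longrightarrow> y \<noteq> 0 \<longrightarrow> z \<noteq> 0 \<longrightarrow>
        (x + inverse x) * phi j1 j2 j3 x y z =
          (\<Sum>a\<in>{1,-1}. \<Sum>b\<in>{1,-1}. Kc a b j1 j2 j3
             * ext phi (int j1 + a) (int j2 + b) (int j3) x y z) \<and>
        (y + inverse y) * phi j1 j2 j3 x y z =
          (\<Sum>a\<in>{1,-1}. \<Sum>b\<in>{1,-1}. Kc a b j1 j3 j2
             * ext phi (int j1 + a) (int j2) (int j3 + b) x y z) \<and>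
        (z + inverse z) * phi j1 j2 j3 x y z =
          (\<Sum>a\<in>{1,-1}. \<Sum>b\<in>{1,-1}. Kc a b j2 j3 j1
             * ext phi (int j1) (int j2 + a) (int j3 + b) x y z))"

end

theory Submission
  imports Defs
begin

(*
  Put x23 = 1 and let psi be the family evaluated at (x12, x13, 1) = (x, y, 1), extended by 0 to
  non-admissible integer triples.  Fix j1 and let S m be the sum of psi over the admissible triples
  with j2 + j3 = j1 + 2 m; this is the left-hand side of the theorem.  Summing the x23-recursion over
  such a level, the two terms that move along the level telescope, and what is left is
  (m + 1) (j1 + m + 2) (S (m + 1) - S m) = m (j1 + m + 1) (S m - S (m - 1)), so S is constant.
  On the bottom level j2 + j3 = j1 = n, the difference of the x12- and x13-recursions, combined with
  the x23-recursion at j1 = n - 1, telescopes to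
    (V x - V y) (n + 1) S 0 = V (x ^ (n + 1)) - V (y ^ (n + 1)),   V t = t + 1 / t,
  where the right-hand side comes from the edges j3 = 0 and j2 = 0 of the bottom level: along them
  (n + 1) psi is the Chebyshev polynomial of the second kind in V x, resp. V y.  Factoring
  V a - V b then gives the formula.
*)

lemma of_nat_add_one_neq_zero [simp]: "(of_nat n + 1 :: 'a::semiring_char_0) \<noteq> 0"
  using of_nat_neq_0[of n, where 'a='a] by (simp add: add.commute)

lemma of_nat_add_numeral_neq_zero [simp]: "(of_nat n + numeral k :: 'a::semiring_char_0) \<noteq> 0"
  using of_nat_eq_0_iff[of "n + numeral k", where 'a='a] by simp

definition Kc_numerator :: "int \<Rightarrow> int \<Rightarrow> int \<Rightarrow> int \<Rightarrow> int \<Rightarrow> int" where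
  "Kc_numerator a b i1 i2 i3 =
     a * b * (a * i1 + b * i2 + i3 + a + b + 2) * (a * i1 + b * i2 - i3 + a + b)"

lemma Kc_sum_cleared:
  "4 * (of_nat p + 1) * (of_nat q + 1) * (\<Sum>a\<in>{1,-1}. \<Sum>b\<in>{1,-1}. Kc a b p q r * h a b)
   = (\<Sum>a\<in>{1,-1}. \<Sum>b\<in>{1,-1}. of_int (Kc_numerator a b p q r) * h a b)"
proof -
  have "(4 * (of_nat p + 1) * (of_nat q + 1) :: complex) \<noteq> 0"
    by (simp only: mult_eq_0_iff) simp
  then have "4 * (of_nat p + 1) * (of_nat q + 1) * Kc a b p q r = of_int (Kc_numerator a b p q r)" for a b
    unfolding Kc_def Kc_numerator_def by simp
  then show ?thesis
    by (simp only: sum_distrib_left mult.assoc[symmetric])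
qed

(* u k = U (k - 1) (t) for x + 1 / x = 2 t, and U (n + 1) - U (n - 1) = 2 T (n + 1). *)
lemma chebyshev_U_diff:
  fixes x :: "'a::field"
  assumes "x \<noteq> 0" and "u 0 = 0" and "u 1 = 1"
    and rec: "\<And>k. u (k + 2) = (x + inverse x) * u (k + 1) - u k"
  shows "u (n + 2) - u n = x ^ (n + 1) + inverse x ^ (n + 1)"
proof (induction n rule: induct_nat_012)
  case 0
  show ?case using rec[of 0] assms(2,3) by simp
next
  case 1
  show ?case using rec[of 0] rec[of 1] assms by (simp add: field_simps power2_eq_square)
next
  case (ge2 n)
  have rec_Suc: "u (Suc (Suc k)) = (x + inverse x) * u (Suc k) - u k" for k
    using rec[of k] by (simp add: numeral_2_eq_2)
  have "u (Suc (Suc n) + 2) - u (Suc (Suc n))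
      = (x + inverse x) * (u (Suc n + 2) - u (Suc n)) - (u (n + 2) - u n)"
    by (simp add: rec_Suc numeral_2_eq_2 algebra_simps)
  also have "\<dots> = (x + inverse x) * (x ^ (Suc n + 1) + inverse x ^ (Suc n + 1))
      - (x ^ (n + 1) + inverse x ^ (n + 1))"
    using ge2.IH by simp
  also have "\<dots> = x ^ (Suc (Suc n) + 1) + inverse x ^ (Suc (Suc n) + 1)"
    using assms(1) by (simp add: field_simps)
  finally show ?case .
qed

lemma chebyshev_U_scaled_diff:
  fixes x :: "'a::field" and w :: "int \<Rightarrow> 'a"
  assumes "x \<noteq> 0" and "w 0 = 1"
    and rec: "\<And>n::nat. (of_nat n + 1) * (x + inverse x) * w (int n)
                = (of_nat n + 2) * w (int n + 1) + of_nat n * w (int n - 1)"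
  shows "(of_nat n + 2) * w (int n + 1) - of_nat n * w (int n - 1) = x ^ (n + 1) + inverse x ^ (n + 1)"
proof -
  define u where "u k = of_nat k * w (int k - 1)" for k
  have u_rec: "u (k + 2) = (x + inverse x) * u (k + 1) - u k" for k
    using rec[of k] by (simp add: u_def algebra_simps)
  have "u (n + 2) - u n = x ^ (n + 1) + inverse x ^ (n + 1)"
    by (rule chebyshev_U_diff[OF assms(1) _ _ u_rec]) (simp_all add: u_def assms(2))
  then show ?thesis
    by (simp add: u_def algebra_simps)
qed

lemma plus_inverse_diff_factor:
  fixes a b :: "'a::field"
  assumes "a \<noteq> 0" and "b \<noteq> 0"
  shows "(1 - b * inverse a) * (1 - b * a) = - b * ((a + inverse a) - (b + inverse b))"
  using assms by (simp add: field_simps)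

locale genus2_schur_at_one =
  fixes phi :: "nat \<Rightarrow> nat \<Rightarrow> nat \<Rightarrow> complex \<Rightarrow> complex \<Rightarrow> complex \<Rightarrow> complex"
    and x y :: complex
  assumes schur: "genus2_schur phi" and x_nz: "x \<noteq> 0" and y_nz: "y \<noteq> 0"
begin

definition psi :: "int \<Rightarrow> int \<Rightarrow> int \<Rightarrow> complex" where
  "psi i1 i2 i3 = ext phi i1 i2 i3 x y 1"

lemma psi_admissible: "admissible j1 j2 j3 \<Longrightarrow> psi (int j1) (int j2) (int j3) = phi j1 j2 j3 x y 1"
  by (simp add: psi_def ext_def)

lemma psi_000: "psi 0 0 0 = 1"
  using psi_admissible[of 0 0 0] schur x_nz y_nz by (simp add: admissible_def genus2_schur_def)

lemma psi_recursions:
  assumes "admissible j1 j2 j3"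
  shows "(x + inverse x) * psi (int j1) (int j2) (int j3)
           = (\<Sum>a\<in>{1,-1}. \<Sum>b\<in>{1,-1}. Kc a b j1 j2 j3 * psi (int j1 + a) (int j2 + b) (int j3))"
    and "(y + inverse y) * psi (int j1) (int j2) (int j3)
           = (\<Sum>a\<in>{1,-1}. \<Sum>b\<in>{1,-1}. Kc a b j1 j3 j2 * psi (int j1 + a) (int j2) (int j3 + b))"
    and "2 * psi (int j1) (int j2) (int j3)
           = (\<Sum>a\<in>{1,-1}. \<Sum>b\<in>{1,-1}. Kc a b j2 j3 j1 * psi (int j1) (int j2 + a) (int j3 + b))"
  using schur[unfolded genus2_schur_def, THEN conjunct2, THEN conjunct2, rule_format,
      OF assms x_nz y_nz one_neq_zero]
  by (simp_all add: psi_def ext_def assms del: sum.insert)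

lemma psi_recursions_cleared:
  assumes "admissible j1 j2 j3"
  shows "4 * (of_nat j1 + 1) * (of_nat j2 + 1) * ((x + inverse x) * psi (int j1) (int j2) (int j3))
           = (\<Sum>a\<in>{1,-1}. \<Sum>b\<in>{1,-1}.
                of_int (Kc_numerator a b j1 j2 j3) * psi (int j1 + a) (int j2 + b) (int j3))"
    and "4 * (of_nat j1 + 1) * (of_nat j3 + 1) * ((y + inverse y) * psi (int j1) (int j2) (int j3))
           = (\<Sum>a\<in>{1,-1}. \<Sum>b\<in>{1,-1}.
                of_int (Kc_numerator a b j1 j3 j2) * psi (int j1 + a) (int j2) (int j3 + b))"
    and "4 * (of_nat j2 + 1) * (of_nat j3 + 1) * (2 * psi (int j1) (int j2) (int j3))
           = (\<Sum>a\<in>{1,-1}. \<Sum>b\<in>{1,-1}.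
                of_int (Kc_numerator a b j2 j3 j1) * psi (int j1) (int j2 + a) (int j3 + b))"
  by (simp_all only: psi_recursions[OF assms] Kc_sum_cleared)

(* For 0 \<le> k \<le> j1 these are exactly the admissible triples (j1, j2, j3) with j2 + j3 = j1 + 2 m. *)
definition psi_diag :: "int \<Rightarrow> int \<Rightarrow> int \<Rightarrow> complex" where
  "psi_diag j1 m k = psi j1 (m + k) (j1 + m - k)"

lemma admissible_diag: "k \<le> j1 \<Longrightarrow> admissible j1 (m + k) (j1 + m - k)"
  by (auto simp: admissible_def)

(* On the bottom level m = 0 the fourth neighbour of the x- and y-recursions has coefficient 0. *)
lemma diag_rec_x:
  assumes "i \<le> n"
  shows "(of_nat n + 1) * (of_nat i + 1) * (x + inverse x) * psi_diag (int n) 0 (int i)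
    = (of_nat n + 2) * (of_nat i + 1) * psi_diag (int n + 1) 0 (int i + 1)
    + (of_nat n - of_nat i) * psi_diag (int n - 1) 1 (int i)
    + of_nat i * (of_nat n + 1) * psi_diag (int n - 1) 0 (int i - 1)"
proof -
  have "4 * ((of_nat n + 1) * (of_nat i + 1) * (x + inverse x) * psi_diag (int n) 0 (int i))
    = 4 * ((of_nat n + 2) * (of_nat i + 1) * psi_diag (int n + 1) 0 (int i + 1)
    + (of_nat n - of_nat i) * psi_diag (int n - 1) 1 (int i)
    + of_nat i * (of_nat n + 1) * psi_diag (int n - 1) 0 (int i - 1))"
    using psi_recursions_cleared(1)[OF admissible_diag[OF assms, of 0]] assms
    by (simp add: psi_diag_def Kc_numerator_def algebra_simps)
  then show ?thesis by (simp only: mult_cancel_left) simp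
qed

lemma diag_rec_y:
  assumes "i \<le> n"
  shows "(of_nat n + 1) * (of_nat n - of_nat i + 1) * (y + inverse y) * psi_diag (int n) 0 (int i)
    = (of_nat n + 2) * (of_nat n - of_nat i + 1) * psi_diag (int n + 1) 0 (int i)
    + of_nat i * psi_diag (int n - 1) 1 (int i - 1)
    + (of_nat n - of_nat i) * (of_nat n + 1) * psi_diag (int n - 1) 0 (int i)"
proof -
  have "4 * ((of_nat n + 1) * (of_nat n - of_nat i + 1) * (y + inverse y) * psi_diag (int n) 0 (int i))
    = 4 * ((of_nat n + 2) * (of_nat n - of_nat i + 1) * psi_diag (int n + 1) 0 (int i)
    + of_nat i * psi_diag (int n - 1) 1 (int i - 1)
    + (of_nat n - of_nat i) * (of_nat n + 1) * psi_diag (int n - 1) 0 (int i))"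
    using psi_recursions_cleared(2)[OF admissible_diag[OF assms, of 0]] assms
    by (simp add: psi_diag_def Kc_numerator_def algebra_simps)
  then show ?thesis by (simp only: mult_cancel_left) simp
qed

lemma diag_rec_z:
  assumes "k \<le> j1"
  shows "2 * (of_nat m + of_nat k + 1) * (of_nat j1 + of_nat m - of_nat k + 1)
      * psi_diag (int j1) (int m) (int k)
    = (of_nat m + 1) * (of_nat j1 + of_nat m + 2) * psi_diag (int j1) (int m + 1) (int k)
    + (of_nat k + 1) * (of_nat j1 - of_nat k) * psi_diag (int j1) (int m) (int k + 1)
    + of_nat k * (of_nat j1 - of_nat k + 1) * psi_diag (int j1) (int m) (int k - 1)
    + of_nat m * (of_nat j1 + of_nat m + 1) * psi_diag (int j1) (int m - 1) (int k)"
proof -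
  have "4 * (2 * (of_nat m + of_nat k + 1) * (of_nat j1 + of_nat m - of_nat k + 1)
      * psi_diag (int j1) (int m) (int k))
    = 4 * ((of_nat m + 1) * (of_nat j1 + of_nat m + 2) * psi_diag (int j1) (int m + 1) (int k)
    + (of_nat k + 1) * (of_nat j1 - of_nat k) * psi_diag (int j1) (int m) (int k + 1)
    + of_nat k * (of_nat j1 - of_nat k + 1) * psi_diag (int j1) (int m) (int k - 1)
    + of_nat m * (of_nat j1 + of_nat m + 1) * psi_diag (int j1) (int m - 1) (int k))"
    using psi_recursions_cleared(3)[OF admissible_diag[OF assms, of m]] assms
    by (simp add: psi_diag_def Kc_numerator_def algebra_simps)
  then show ?thesis by (simp only: mult_cancel_left) simp
qed

definition diag_sum :: "nat \<Rightarrow> nat \<Rightarrow> complex" where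
  "diag_sum j1 m = (\<Sum>k\<le>j1. psi_diag (int j1) (int m) (int k))"

lemma diag_sum_rec:
  "diag_sum j1 (Suc m) - diag_sum j1 m
   = of_nat m * (of_nat j1 + of_nat m + 1) / ((of_nat m + 1) * (of_nat j1 + of_nat m + 2))
     * (diag_sum j1 m - diag_sum j1 (m - 1))"
proof -
  \<comment> \<open>w vanishes at k = 0 and k = j1 + 1, so the neighbours k - 1 and k + 1 in the
    z-recursion telescope\<close>
  define w :: "nat \<Rightarrow> complex" where "w k = of_nat k * (of_nat j1 - of_nat k + 1)" for k
  define u where "u k = w k * psi_diag (int j1) (int m) (int k)" for k
  define v where "v k = w k * psi_diag (int j1) (int m) (int k - 1)" for k
  have step: "(of_nat m + 1) * (of_nat j1 + of_nat m + 2) * psi_diag (int j1) (int m + 1) (int k)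
      = (2 * (of_nat m + 1) * (of_nat j1 + of_nat m + 1) - of_nat j1) * psi_diag (int j1) (int m) (int k)
        - of_nat m * (of_nat j1 + of_nat m + 1) * psi_diag (int j1) (int m - 1) (int k)
        + (u k - u (k + 1)) + (v (k + 1) - v k)" if "k \<le> j1" for k
    using diag_rec_z[OF that, of m] unfolding u_def v_def w_def
    by (simp add: add.commute[of 1 "int k"]) algebra
  have "(\<Sum>k\<le>j1. u k - u (k + 1)) = u 0 - u (Suc j1)"
    using sum_lessThan_telescope'[of u "Suc j1"] by (simp add: lessThan_Suc_atMost)
  moreover have "(\<Sum>k\<le>j1. v (k + 1) - v k) = v (Suc j1) - v 0"
    using sum_lessThan_telescope[of v "Suc j1"] by (simp add: lessThan_Suc_atMost)
  moreover have "u 0 = 0" "u (Suc j1) = 0" "v 0 = 0" "v (Suc j1) = 0"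
    by (simp_all add: u_def v_def w_def)
  ultimately have "(of_nat m + 1) * (of_nat j1 + of_nat m + 2) * diag_sum j1 (Suc m)
      = (2 * (of_nat m + 1) * (of_nat j1 + of_nat m + 1) - of_nat j1) * diag_sum j1 m
        - of_nat m * (of_nat j1 + of_nat m + 1) * (\<Sum>k\<le>j1. psi_diag (int j1) (int m - 1) (int k))"
    by (simp add: diag_sum_def sum_distrib_left step sum.distrib sum_subtractf add.commute[of 1 "int m"]
        flip: mult.assoc)
  also have "of_nat m * (of_nat j1 + of_nat m + 1) * (\<Sum>k\<le>j1. psi_diag (int j1) (int m - 1) (int k))
      = of_nat m * (of_nat j1 + of_nat m + 1) * diag_sum j1 (m - 1)"
    by (cases m) (simp_all add: diag_sum_def)
  finally have "(of_nat m + 1) * (of_nat j1 + of_nat m + 2) * diag_sum j1 (Suc m)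
      = (2 * (of_nat m + 1) * (of_nat j1 + of_nat m + 1) - of_nat j1) * diag_sum j1 m
        - of_nat m * (of_nat j1 + of_nat m + 1) * diag_sum j1 (m - 1)" .
  moreover have "(of_nat m + 1) * (of_nat j1 + of_nat m + 2) \<noteq> (0::complex)"
    using of_nat_add_numeral_neq_zero[of "j1 + m", where 'a=complex] by simp
  ultimately show ?thesis
    by (simp add: field_simps)
qed

lemma diag_sum_succ: "diag_sum j1 (Suc m) = diag_sum j1 m"
proof (induction m)
  case 0
  show ?case using diag_sum_rec[of j1 0] by simp
next
  case (Suc m)
  show ?case using diag_sum_rec[of j1 "Suc m"] Suc.IH by simp
qed

lemma diag_sum_const: "diag_sum j1 m = diag_sum j1 0"
  by (induction m) (simp_all add: diag_sum_succ)

(* Chosen so that, after eliminating psi_diag (n - 1) 1 i with the z-recursion at (n - 1, i, n - 1 - i),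
   the terms with j1 = n - 1 in the x- and y-recursions at (n, i, n - i) telescope in i. *)
definition diag_telescope_term :: "nat \<Rightarrow> nat \<Rightarrow> complex" where
  "diag_telescope_term n k =
     (of_nat k * psi_diag (int n - 1) 1 (int k - 1)
      + (of_nat n - of_nat k) * (2 * of_nat k - of_nat n - 1) * psi_diag (int n - 1) 0 (int k))
     / (of_nat n - of_nat k + 1)
     - 2 * of_nat k * psi_diag (int n - 1) 0 (int k - 1)"

lemma diag_bottom_step:
  assumes "i < n"
  shows "(x + inverse x - (y + inverse y)) * (of_nat n + 1) * psi_diag (int n) 0 (int i)
    = (of_nat n + 2) * (psi_diag (int n + 1) 0 (int i + 1) - psi_diag (int n + 1) 0 (int i))
      + (diag_telescope_term n (i + 1) - diag_telescope_term n i)"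
    (is "?L = ?A + (?T1 - ?T0)")
proof -
  let ?F = "\<lambda>k. psi_diag (int n - 1) 1 k" and ?E = "\<lambda>k. psi_diag (int n - 1) 0 k"
  have i_le: "i \<le> n"
    using assms by simp
  have nz: "(of_nat i + 1 :: complex) \<noteq> 0" "(of_nat n - of_nat i :: complex) \<noteq> 0"
    "(of_nat n - of_nat i + 1 :: complex) \<noteq> 0"
    using assms of_nat_add_one_neq_zero[of "n - i", where 'a=complex] by simp_all
  define P where "P = ((of_nat i + 1) * ?F (int i)
      + (of_nat n - of_nat i - 1) * (2 * of_nat i + 1 - of_nat n) * ?E (int i + 1)) / (of_nat n - of_nat i)"
  define Q where "Q = (of_nat i * ?F (int i - 1)
      + (of_nat n - of_nat i) * (2 * of_nat i - of_nat n - 1) * ?E (int i)) / (of_nat n - of_nat i + 1)"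
  have T1: "?T1 = P - 2 * (of_nat i + 1) * ?E (int i)"
    by (simp add: diag_telescope_term_def P_def algebra_simps)
  have T0: "?T0 = Q - 2 * of_nat i * ?E (int i - 1)"
    by (simp add: diag_telescope_term_def Q_def)
  have P: "(of_nat n - of_nat i) * P
      = (of_nat i + 1) * ?F (int i) + (of_nat n - of_nat i - 1) * (2 * of_nat i + 1 - of_nat n) * ?E (int i + 1)"
    and Q: "(of_nat n - of_nat i + 1) * Q
      = of_nat i * ?F (int i - 1) + (of_nat n - of_nat i) * (2 * of_nat i - of_nat n - 1) * ?E (int i)"
    using nz by (simp_all add: P_def Q_def)
  have rec_z: "2 * (of_nat i + 1) * (of_nat n - of_nat i) * ?E (int i)
    = (of_nat n + 1) * ?F (int i) + (of_nat i + 1) * (of_nat n - of_nat i - 1) * ?E (int i + 1)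
      + of_nat i * (of_nat n - of_nat i) * ?E (int i - 1)"
    using diag_rec_z[of i "n - 1" 0] assms by (simp add: algebra_simps)
  have "(of_nat i + 1) * (of_nat n - of_nat i) * (of_nat n - of_nat i + 1) * ?L
      = (of_nat i + 1) * (of_nat n - of_nat i) * (of_nat n - of_nat i + 1) * (?A + (?T1 - ?T0))"
    unfolding T1 T0 using diag_rec_x[OF i_le] diag_rec_y[OF i_le] rec_z P Q by algebra
  then show ?thesis
    using nz by (simp only: mult_cancel_left) simp
qed

lemma diag_edge_rec_x:
  "(of_nat n + 1) * (x + inverse x) * psi_diag (int n) 0 (int n)
    = (of_nat n + 2) * psi_diag (int n + 1) 0 (int n + 1) + of_nat n * psi_diag (int n - 1) 0 (int n - 1)"
proof -
  have "(of_nat n + 1) * ((of_nat n + 1) * (x + inverse x) * psi_diag (int n) 0 (int n))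
    = (of_nat n + 1) * ((of_nat n + 2) * psi_diag (int n + 1) 0 (int n + 1)
      + of_nat n * psi_diag (int n - 1) 0 (int n - 1))"
    using diag_rec_x[of n n] by (simp add: algebra_simps)
  then show ?thesis
    by (simp only: mult_cancel_left) simp
qed

lemma diag_edge_rec_y:
  "(of_nat n + 1) * (y + inverse y) * psi_diag (int n) 0 0
    = (of_nat n + 2) * psi_diag (int n + 1) 0 0 + of_nat n * psi_diag (int n - 1) 0 0"
proof -
  have "(of_nat n + 1) * ((of_nat n + 1) * (y + inverse y) * psi_diag (int n) 0 0)
    = (of_nat n + 1) * ((of_nat n + 2) * psi_diag (int n + 1) 0 0 + of_nat n * psi_diag (int n - 1) 0 0)"
    using diag_rec_y[of 0 n] by (simp add: algebra_simps)
  then show ?thesis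
    by (simp only: mult_cancel_left) simp
qed

lemma diag_bottom_step_last:
  "(x + inverse x - (y + inverse y)) * (of_nat n + 1) * psi_diag (int n) 0 (int n)
    = (of_nat n + 2) * (psi_diag (int n + 1) 0 (int n + 1) - psi_diag (int n + 1) 0 (int n))
      - of_nat n * psi_diag (int n - 1) 1 (int n - 1) + of_nat n * psi_diag (int n - 1) 0 (int n - 1)"
proof -
  have "(of_nat n + 1) * (y + inverse y) * psi_diag (int n) 0 (int n)
    = (of_nat n + 2) * psi_diag (int n + 1) 0 (int n) + of_nat n * psi_diag (int n - 1) 1 (int n - 1)"
    using diag_rec_y[of n n] by simp
  with diag_edge_rec_x[of n] show ?thesis
    by (simp add: algebra_simps)
qed

lemma diag_sum_bottom_eq_edges:
  "(x + inverse x - (y + inverse y)) * (of_nat n + 1) * diag_sum n 0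
    = ((of_nat n + 2) * psi_diag (int n + 1) 0 (int n + 1) - of_nat n * psi_diag (int n - 1) 0 (int n - 1))
      - ((of_nat n + 2) * psi_diag (int n + 1) 0 0 - of_nat n * psi_diag (int n - 1) 0 0)"
proof -
  let ?c = "(x + inverse x - (y + inverse y)) * (of_nat n + 1)"
  let ?A = "\<lambda>i::nat. psi_diag (int n + 1) 0 (int i)"
  have "?c * diag_sum n 0 = (\<Sum>i<n. ?c * psi_diag (int n) 0 (int i)) + ?c * psi_diag (int n) 0 (int n)"
    by (simp add: diag_sum_def sum_distrib_left distrib_left flip: lessThan_Suc_atMost)
  also have "(\<Sum>i<n. ?c * psi_diag (int n) 0 (int i))
      = (\<Sum>i<n. (of_nat n + 2) * (?A (Suc i) - ?A i) + (diag_telescope_term n (Suc i) - diag_telescope_term n i))"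
    using diag_bottom_step by (intro sum.cong) (simp_all add: add.commute)
  also have "\<dots> = (of_nat n + 2) * (?A n - ?A 0) + (diag_telescope_term n n - diag_telescope_term n 0)"
    by (simp only: sum.distrib flip: sum_distrib_left)
      (simp only: sum_lessThan_telescope[of "\<lambda>i. psi_diag (int n + 1) 0 (int i)"]
        sum_lessThan_telescope[of "diag_telescope_term n"])
  also have "diag_telescope_term n n = of_nat n * psi_diag (int n - 1) 1 (int n - 1)
      - 2 * of_nat n * psi_diag (int n - 1) 0 (int n - 1)"
    by (simp add: diag_telescope_term_def)
  also have "diag_telescope_term n 0 = - of_nat n * psi_diag (int n - 1) 0 0"
    using of_nat_add_one_neq_zero[of n, where 'a=complex]
    by (simp add: diag_telescope_term_def nonzero_divide_eq_eq algebra_simps)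
  also have "?c * psi_diag (int n) 0 (int n)
      = (of_nat n + 2) * (psi_diag (int n + 1) 0 (int n + 1) - ?A n)
        - of_nat n * psi_diag (int n - 1) 1 (int n - 1) + of_nat n * psi_diag (int n - 1) 0 (int n - 1)"
    by (rule diag_bottom_step_last)
  finally show ?thesis
    by (simp add: algebra_simps)
qed

lemma diag_edge_x:
  "(of_nat n + 2) * psi_diag (int n + 1) 0 (int n + 1) - of_nat n * psi_diag (int n - 1) 0 (int n - 1)
    = x ^ (n + 1) + inverse x ^ (n + 1)"
  by (rule chebyshev_U_scaled_diff[where w = "\<lambda>k. psi_diag k 0 k", OF x_nz _ diag_edge_rec_x])
    (simp add: psi_diag_def psi_000)

lemma diag_edge_y:
  "(of_nat n + 2) * psi_diag (int n + 1) 0 0 - of_nat n * psi_diag (int n - 1) 0 0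
    = y ^ (n + 1) + inverse y ^ (n + 1)"
  by (rule chebyshev_U_scaled_diff[where w = "\<lambda>k. psi_diag k 0 0", OF y_nz _ diag_edge_rec_y])
    (simp add: psi_diag_def psi_000)

lemma diag_sum_closed_form:
  assumes "y \<noteq> x" and "y * x \<noteq> 1"
  shows "diag_sum n 0 = (1 - y ^ (n + 1) * inverse x ^ (n + 1)) * (1 - y ^ (n + 1) * x ^ (n + 1))
         / ((of_nat n + 1) * y ^ n * (1 - y / x) * (1 - y * x))"
proof -
  have base: "(x + inverse x - (y + inverse y)) * (of_nat n + 1) * diag_sum n 0
      = (x ^ (n + 1) + inverse (x ^ (n + 1))) - (y ^ (n + 1) + inverse (y ^ (n + 1)))"
    using diag_sum_bottom_eq_edges by (simp add: diag_edge_x diag_edge_y power_inverse)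
  have "(1 - y ^ (n + 1) * inverse x ^ (n + 1)) * (1 - y ^ (n + 1) * x ^ (n + 1))
      = - (y ^ (n + 1)) * ((x + inverse x - (y + inverse y)) * (of_nat n + 1) * diag_sum n 0)"
    using plus_inverse_diff_factor[of "x ^ (n + 1)" "y ^ (n + 1)"] x_nz y_nz by (simp add: base power_inverse)
  also have "\<dots> = (of_nat n + 1) * y ^ n * ((1 - y * inverse x) * (1 - y * x)) * diag_sum n 0"
    unfolding plus_inverse_diff_factor[OF x_nz y_nz] by (simp add: algebra_simps)
  finally have "(of_nat n + 1) * y ^ n * (1 - y / x) * (1 - y * x) * diag_sum n 0
      = (1 - y ^ (n + 1) * inverse x ^ (n + 1)) * (1 - y ^ (n + 1) * x ^ (n + 1))"
    by (simp add: divide_inverse)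
  moreover have "(of_nat n + 1) * y ^ n * (1 - y / x) * (1 - y * x) \<noteq> 0"
    using assms x_nz y_nz by auto
  ultimately show ?thesis
    by (simp add: nonzero_eq_divide_eq mult.commute)
qed

lemma admissible_sum_eq_diag_sum:
  assumes "J = j1 + 2 * m"
  shows "(\<Sum>j2\<in>{j2. j2 \<le> J \<and> admissible j1 j2 (J - j2)}. phi j1 j2 (J - j2) x y 1) = diag_sum j1 m"
proof -
  have "{j2. j2 \<le> J \<and> admissible j1 j2 (J - j2)} = {0 + m..j1 + m}"
    using assms by (auto simp: admissible_def)
  then have "(\<Sum>j2\<in>{j2. j2 \<le> J \<and> admissible j1 j2 (J - j2)}. phi j1 j2 (J - j2) x y 1)
      = (\<Sum>k\<le>j1. phi j1 (k + m) (J - (k + m)) x y 1)"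
    by (simp only: sum.shift_bounds_cl_nat_ivl atLeast0AtMost)
  also have "\<dots> = diag_sum j1 m"
    unfolding diag_sum_def
  proof (rule sum.cong)
    fix k assume "k \<in> {..j1}"
    then have "admissible j1 (k + m) (J - (k + m))" and "J - (k + m) = j1 + m - k"
      using assms by (auto simp: admissible_def)
    then show "phi j1 (k + m) (J - (k + m)) x y 1 = psi_diag (int j1) (int m) (int k)"
      using \<open>k \<in> {..j1}\<close> by (simp add: psi_diag_def psi_admissible[symmetric] add.commute)
  qed simp
  finally show ?thesis .
qed

end

theorem mainTheorem15:
  fixes phi :: "nat \<Rightarrow> nat \<Rightarrow> nat \<Rightarrow> complex \<Rightarrow> complex \<Rightarrow> complex \<Rightarrow> complex"
    and j1 J :: nat and x12 x13 :: complex
  assumes "genus2_schur phi"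
    and "J \<ge> j1" and "even (J - j1)"
    and "x12 \<noteq> 0" and "x13 \<noteq> 0" and "x13 \<noteq> x12" and "x13 * x12 \<noteq> 1"
  shows "(\<Sum>j2\<in>{j2. j2 \<le> J \<and> admissible j1 j2 (J - j2)}. phi j1 j2 (J - j2) x12 x13 1)
       = (1 - x13 ^ (j1 + 1) * inverse x12 ^ (j1 + 1)) * (1 - x13 ^ (j1 + 1) * x12 ^ (j1 + 1))
         / ((of_nat j1 + 1) * x13 ^ j1 * (1 - x13 / x12) * (1 - x13 * x12))"
proof -
  interpret genus2_schur_at_one phi x12 x13
    using assms(1,4,5) by unfold_locales
  obtain m where "J = j1 + 2 * m"
    using assms(2,3) by (metis dvd_def le_add_diff_inverse)
  then have "(\<Sum>j2\<in>{j2. j2 \<le> J \<and> admissible j1 j2 (J - j2)}. phi j1 j2 (J - j2) x12 x13 1)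
      = diag_sum j1 m"
    by (rule admissible_sum_eq_diag_sum)
  also have "\<dots> = diag_sum j1 0"
    by (rule diag_sum_const)
  also have "\<dots> = (1 - x13 ^ (j1 + 1) * inverse x12 ^ (j1 + 1)) * (1 - x13 ^ (j1 + 1) * x12 ^ (j1 + 1))
         / ((of_nat j1 + 1) * x13 ^ j1 * (1 - x13 / x12) * (1 - x13 * x12))"
    using assms(6,7) by (rule diag_sum_closed_form)
  finally show ?thesis .
qed

end
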